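(* Let $\vec k$ be a vector of positive integers with $\ell(\vec k)=1$ or $\ell(\vec k)=2$. Then $\mathrm{depth}(\pi)=\mathrm{bounce}(\pi)$ for every $\pi\in\mathcal D_{\vec k}$. In particular, $$\sum_{\pi\in\mathcal D_{\vec k}}q^{\mathrm{area}(\pi)}t^{\mathrm{depth}(\pi)}=\sum_{\pi\in\mathcal D_{\vec k}}q^{\mathrm{area}(\pi)}t^{\mathrm{bounce}(\pi)}.$$
   Context: For $\vec k=(k_1,\dots,k_\ell)$ put $|\vec k|=\sum k_i$, $N=|\vec k|+\ell$. A $\vec k$-Dyck path is a word $\pi=\pi_1\cdots\pi_N$ containing the letters $S^{k_1},\dots,S^{k_\ell}$ exactly once each and in this order, together with $|\vec k|$ letters $W$, such that all starting ranks are nonnegative, where $r_1=0$, $r_{i+1}=r_i+k_j$ if $\pi_i=S^{k_j}$ and $r_{i+1}=r_i-1$ if $\pi_i=W$. $\mathcal D_{\vec k}$ is the set of such paths. $\mathrm{area}(\pi)=\sum_j a_j$ where $a_j$ is the starting rank of $S^{k_j}$. Filling algorithms: in a tableau of $\ell$ top-justified columns, column $i$ having $k_i+1$ cells, place $1$ at the top of column 1; for $i=2,\dots,N$, call an entry active if it is currently the bottom entry of a column $i'$ not yet containing $k_{i'}+1$ entries; if $\pi_i=W$ place $i$ immediately below the smallest active entry (algorithm $\eta$) resp. the largest active entry (algorithm $\eta_*$); otherwise place $i$ at the top of the first empty column. Ranking: for a filled tableau $F$, column 1 gets ranks $0,\dots,k_1$ top to bottom; for $i\ge2$, if the top entry of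 column $i$ of $F$ is $A+1$ and $A$ has rank $\alpha$, column $i$ gets ranks $\alpha,\dots,\alpha+k_i$ top to bottom. $\mathrm{bounce}(\pi)$ is the sum of the first-row ranks for $F=\eta(\pi)$, and $\mathrm{depth}(\pi)$ is the sum of the first-row ranks for $F=\eta_*(\pi)$. *)

theory Defs
  imports Main
begin

text \<open>Letters of a k-Dyck path: S j stands for the letter S^{k_j} (0-based index j),
  W is a west step.\<close>
datatype letter = S nat | W

definition step :: "nat list \<Rightarrow> letter \<Rightarrow> int" where
  "step k x = (case x of S j \<Rightarrow> int (k ! j) | W \<Rightarrow> -1)"

text \<open>Starting rank of the letter at 0-based position i (= r_{i+1} in the paper).\<close>
definition start_rank :: "nat list \<Rightarrow> letter list \<Rightarrow> nat \<Rightarrow> int" where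
  "start_rank k p i = sum_list (map (step k) (take i p))"

definition is_dyck :: "nat list \<Rightarrow> letter list \<Rightarrow> bool" where
  "is_dyck k p \<longleftrightarrow>
     filter (\<lambda>x. x \<noteq> W) p = map S [0..<length k] \<and>
     length (filter (\<lambda>x. x = W) p) = sum_list k \<and>
     (\<forall>i < length p. start_rank k p i \<ge> 0)"

definition dyck_paths :: "nat list \<Rightarrow> letter list set" where
  "dyck_paths k = {p. is_dyck k p}"

definition area :: "nat list \<Rightarrow> letter list \<Rightarrow> nat" where
  "area k p = (\<Sum>i \<in> {i. i < length p \<and> p ! i \<noteq> W}. nat (start_rank k p i))"

text \<open>Tableaux: list of columns (column c has target size k!c + 1), each column listed
  top to bottom.\<close>
definition active_cols :: "nat list \<Rightarrow> nat list list \<Rightarrow> nat set" where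
  "active_cols k T = {c. c < length T \<and> T ! c \<noteq> [] \<and> length (T ! c) < k ! c + 1}"

definition fill_step ::
  "(nat set \<Rightarrow> nat) \<Rightarrow> nat list \<Rightarrow> nat list list \<Rightarrow> nat \<Rightarrow> letter \<Rightarrow> nat list list" where
  "fill_step sel k T i x =
     (case x of
        W \<Rightarrow> (let m = sel ((\<lambda>c. last (T ! c)) ` active_cols k T);
                   c = (LEAST c. c \<in> active_cols k T \<and> last (T ! c) = m)
               in T[c := T ! c @ [i]])
      | S _ \<Rightarrow> (let c = (LEAST c. c < length T \<and> T ! c = []) in T[c := [i]]))"

definition fill :: "(nat set \<Rightarrow> nat) \<Rightarrow> nat list \<Rightarrow> letter list \<Rightarrow> nat list list" where
  "fill sel k p =
     foldl (\<lambda>T i. fill_step sel k T i (p ! (i - 1)))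
           ([1] # replicate (length k - 1) []) [2..<length p + 1]"

definition eta :: "nat list \<Rightarrow> letter list \<Rightarrow> nat list list" where
  "eta = fill Min"

definition eta_star :: "nat list \<Rightarrow> letter list \<Rightarrow> nat list list" where
  "eta_star = fill Max"

text \<open>Ranking: tops is the list of ranks of the top cells of the columns already ranked;
  the rank of an entry A lying in an already ranked column c at row r (0-based) is
  tops!c + r.\<close>
definition entry_rank :: "nat list list \<Rightarrow> nat list \<Rightarrow> nat \<Rightarrow> nat" where
  "entry_rank F tops A =
     (let c = (LEAST c. c < length tops \<and> A \<in> set (F ! c));
          r = (LEAST r. r < length (F ! c) \<and> F ! c ! r = A)
      in tops ! c + r)"

definition top_ranks :: "nat list list \<Rightarrow> nat list" where
  "top_ranks F =
     foldl (\<lambda>tops i. tops @ [entry_rank F tops (hd (F ! i) - 1)]) [0] [1..<length F]"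

definition bounce :: "nat list \<Rightarrow> letter list \<Rightarrow> nat" where
  "bounce k p = sum_list (top_ranks (eta k p))"

definition depth :: "nat list \<Rightarrow> letter list \<Rightarrow> nat" where
  "depth k p = sum_list (top_ranks (eta_star k p))"

end

theory Submission
  imports Defs "HOL-Library.Sublist"
begin

(* With a single column every tableau has first-row rank list [0].  With two columns,
   nonnegativity of the ranks forces a path S^k1 W^m S^k2 W^n with m <= k1.  Before the
   second S the only active entry is the bottom of column 1, so both algorithms put
   2, ..., m+1 there and m+2 on top of column 2; the remaining W steps only extend columns.
   Hence in both tableaux the entry m+1 lies in row m of column 1, and the first-row ranks
   are 0 and m for eta and eta_* alike. *)

lemma length_fill_step [simp]: "length (fill_step sel k T i x) = length T"
  by (cases x) (simp_all add: fill_step_def Let_def)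

lemma length_fill:
  assumes "k \<noteq> []"
  shows "length (fill sel k p) = length k"
proof -
  have "length (foldl (\<lambda>T i. fill_step sel k T i (p ! (i - 1))) T0 is) = length T0"
    for T0 "is" by (induction "is" arbitrary: T0) simp_all
  then show ?thesis
    using assms by (simp add: fill_def)
qed

lemma top_ranks_single_column: "length F = 1 \<Longrightarrow> top_ranks F = [0]"
  by (simp add: top_ranks_def)

lemma fill_step_W_extends_columns: "list_all2 prefix T (fill_step sel k T i W)"
proof -
  obtain c where "fill_step sel k T i W = T[c := T ! c @ [i]]"
    unfolding fill_step_def Let_def by simp
  moreover have "prefix (T ! j) (T[c := T ! c @ [i]] ! j)" if "j < length T" for j
    using that by (cases "c < length T") (auto simp: nth_list_update)
  ultimately show ?thesis
    by (simp add: list_all2_conv_all_nth)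
qed

lemma foldl_fill_step_W_extends_columns:
  assumes "\<forall>i \<in> set is. p ! (i - 1) = W"
  shows "list_all2 prefix T (foldl (\<lambda>T i. fill_step sel k T i (p ! (i - 1))) T is)"
  using assms
proof (induction "is" arbitrary: T)
  case Nil
  then show ?case
    by (simp add: list_all2_refl)
next
  case (Cons i "is")
  then have "list_all2 prefix T (fill_step sel k T i (p ! (i - 1)))"
    using fill_step_W_extends_columns by simp
  moreover have "list_all2 prefix (fill_step sel k T i (p ! (i - 1)))
      (foldl (\<lambda>T i. fill_step sel k T i (p ! (i - 1))) (fill_step sel k T i (p ! (i - 1))) is)"
    using Cons by simp
  ultimately show ?case
    by (simp add: list_all2_trans[OF prefix_order.trans])
qed

lemma foldl_fill_step_W_first_column:
  assumes sel: "\<And>x. sel {x} = x"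
    and W: "\<And>i. 2 \<le> i \<Longrightarrow> i \<le> m + 1 \<Longrightarrow> p ! (i - 1) = W"
    and "m \<le> k0"
  shows "foldl (\<lambda>T i. fill_step sel [k0, k1] T i (p ! (i - 1))) [[1], []] [2..<m + 2]
           = [[1..<m + 2], []]"
  using assms(2,3)
proof (induction m)
  case 0
  then show ?case by simp
next
  case (Suc m)
  have active: "active_cols [k0, k1] [[1..<m + 2], []] = {0}"
    using Suc.prems by (auto simp: active_cols_def less_Suc_eq)
  have least: "(LEAST c. c \<in> {0::nat} \<and> last ([[1..<m + 2], []] ! c) = m + 1) = 0"
    by (rule Least_equality) auto
  let ?f = "\<lambda>T i. fill_step sel [k0, k1] T i (p ! (i - 1))"
  have "[2..<Suc m + 2] = [2..<m + 2] @ [m + 2]"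
    by simp
  then have "foldl ?f [[1], []] [2..<Suc m + 2] = ?f (foldl ?f [[1], []] [2..<m + 2]) (m + 2)"
    by (simp only: foldl_append foldl.simps)
  also have "\<dots> = fill_step sel [k0, k1] [[1..<m + 2], []] (m + 2) W"
  proof -
    have "foldl ?f [[1], []] [2..<m + 2] = [[1..<m + 2], []]"
      using Suc.prems by (intro Suc.IH) auto
    moreover have "p ! (m + 2 - 1) = W"
      using Suc.prems(1)[of "m + 2"] by simp
    ultimately show ?thesis
      by (simp only:)
  qed
  also have "\<dots> = [[1..<Suc m + 2], []]"
    using active least sel by (simp add: fill_step_def Let_def)
  finally show ?case .
qed

lemma dyck_two_columns_shape:
  assumes "is_dyck [k0, k1] p"
  obtains m n where "p = S 0 # replicate m W @ S 1 # replicate n W" and "m \<le> k0"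
proof -
  have letters: "filter (\<lambda>x. x \<noteq> W) p = [S 0, S 1]"
    and nonneg: "\<forall>i < length p. start_rank [k0, k1] p i \<ge> 0"
    using assms by (simp_all add: is_dyck_def upt_rec)
  obtain us r where p: "p = us @ S 0 # r" and us: "\<forall>u \<in> set us. u = W"
    and r: "filter (\<lambda>x. x \<noteq> W) r = [S 1]"
    using filter_eq_Cons_iff[THEN iffD1, OF letters] by force
  obtain vs ws where r_eq: "r = vs @ S 1 # ws" and vs: "\<forall>u \<in> set vs. u = W"
    and "filter (\<lambda>x. x \<noteq> W) ws = []"
    using filter_eq_Cons_iff[THEN iffD1, OF r] by force
  then have ws: "\<forall>u \<in> set ws. u = W"
    by (simp add: filter_empty_conv)
  have "us = []"
  proof (rule ccontr)
    assume "us \<noteq> []"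
    then have "p ! 0 = W" and "1 < length p"
      using us p by (auto simp: neq_Nil_conv)
    then have "start_rank [k0, k1] p 1 = -1"
      by (cases p) (auto simp: start_rank_def step_def)
    then show False
      using nonneg \<open>1 < length p\<close> by fastforce
  qed
  define m where "m = length vs"
  have vs_eq: "vs = replicate m W" and ws_eq: "ws = replicate (length ws) W"
    using vs ws by (simp_all add: m_def replicate_length_same)
  have p_eq: "p = S 0 # replicate m W @ S 1 # replicate (length ws) W"
    using p r_eq \<open>us = []\<close> vs_eq ws_eq by simp
  have "start_rank [k0, k1] p (m + 1) = int k0 - int m"
    unfolding start_rank_def p_eq by (simp add: step_def sum_list_replicate)
  moreover have "m + 1 < length p"
    using p_eq by simp
  ultimately have "m \<le> k0"
    using nonneg by fastforce
  with p_eq show thesis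
    by (rule that)
qed

lemma fill_two_columns:
  assumes sel: "\<And>x. sel {x} = x" and "m \<le> k0"
  obtains X Y where
    "fill sel [k0, k1] (S 0 # replicate m W @ S 1 # replicate n W) = [[1..<m + 2] @ X, (m + 2) # Y]"
proof -
  define p where "p = S 0 # replicate m W @ S 1 # replicate n W"
  let ?f = "\<lambda>T i. fill_step sel [k0, k1] T i (p ! (i - 1))"
  have W_before: "p ! (i - 1) = W" if "2 \<le> i" "i \<le> m + 1" for i
    using that by (cases i) (auto simp: p_def nth_append)
  have S_second: "p ! (m + 1) = S 1"
    by (simp add: p_def nth_append)
  have W_after: "\<forall>i \<in> set [m + 3..<length p + 1]. p ! (i - 1) = W"
    by (auto simp: p_def nth_append nth_Cons')
  have indices: "[2..<length p + 1] = [2..<m + 2] @ (m + 2) # [m + 3..<length p + 1]"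
    using upt_add_eq_append[of 2 "m + 2" "n + 1"]
    by (simp add: p_def upt_conv_Cons add.assoc eval_nat_numeral del: upt_Suc)
  have second_S: "fill_step sel [k0, k1] [[1..<m + 2], []] (m + 2) (S 1) = [[1..<m + 2], [m + 2]]"
  proof -
    have "(LEAST c. c < length [[1..<m + 2], []] \<and> [[1..<m + 2], []] ! c = []) = 1"
      by (rule Least_equality) (auto simp: less_Suc_eq)
    then show ?thesis
      by (simp add: fill_step_def Let_def)
  qed
  have "fill sel [k0, k1] p = foldl ?f [[1..<m + 2], [m + 2]] [m + 3..<length p + 1]"
    unfolding fill_def indices
    using foldl_fill_step_W_first_column[OF sel W_before \<open>m \<le> k0\<close>] S_second second_S by simp
  moreover have "list_all2 prefix [[1..<m + 2], [m + 2]] \<dots>"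
    by (rule foldl_fill_step_W_extends_columns[OF W_after])
  ultimately show thesis
    using that by (auto simp: p_def list_all2_Cons1 prefix_def)
qed

lemma top_ranks_two_columns: "top_ranks [[1..<m + 2] @ X, (m + 2) # Y] = [0, m]"
proof -
  have column: "(LEAST c. c < length [0::nat] \<and> m + 1 \<in> set ([[1..<m + 2] @ X, (m + 2) # Y] ! c)) = 0"
    by (rule Least_equality) auto
  have row: "(LEAST r. r < length ([1..<m + 2] @ X) \<and> ([1..<m + 2] @ X) ! r = m + 1) = m"
  proof (rule Least_equality)
    show "m < length ([1..<m + 2] @ X) \<and> ([1..<m + 2] @ X) ! m = m + 1"
      by (simp add: nth_append)
  next
    fix r
    assume "r < length ([1..<m + 2] @ X) \<and> ([1..<m + 2] @ X) ! r = m + 1"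
    then show "m \<le> r"
      by (cases "r < m + 1") (auto simp: nth_append simp del: upt_Suc)
  qed
  show ?thesis
    unfolding top_ranks_def entry_rank_def using column row by (simp add: Let_def)
qed

lemma depth_eq_bounce:
  assumes "length k = 1 \<or> length k = 2" and "p \<in> dyck_paths k"
  shows "depth k p = bounce k p"
proof (cases "length k = 1")
  case True
  then have "k \<noteq> []"
    by auto
  with True have "top_ranks (fill sel k p) = [0]" for sel
    by (simp add: top_ranks_single_column length_fill)
  then show ?thesis
    by (simp add: depth_def bounce_def eta_def eta_star_def)
next
  case False
  with assms(1) obtain k0 k1 where k: "k = [k0, k1]"
    by (auto simp: length_Suc_conv numeral_2_eq_2)
  with assms(2) obtain m n where p: "p = S 0 # replicate m W @ S 1 # replicate n W" and "m \<le> k0"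
    by (auto simp: dyck_paths_def elim: dyck_two_columns_shape)
  have "top_ranks (fill sel k p) = [0, m]" if "\<And>x. sel {x} = x" for sel
    using fill_two_columns[OF that \<open>m \<le> k0\<close>] by (metis k p top_ranks_two_columns)
  then show ?thesis
    by (simp add: depth_def bounce_def eta_def eta_star_def)
qed

theorem proposition5p5:
  fixes k :: "nat list" and q t :: "'a :: comm_semiring_1"
  assumes "\<forall>x \<in> set k. 0 < x"
    and "length k = 1 \<or> length k = 2"
  shows "(\<forall>p \<in> dyck_paths k. depth k p = bounce k p) \<and>
         (\<Sum>p \<in> dyck_paths k. q ^ area k p * t ^ depth k p) =
         (\<Sum>p \<in> dyck_paths k. q ^ area k p * t ^ bounce k p)"
  using depth_eq_bounce[OF assms(2)] by (auto intro: sum.cong)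

end
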